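(* For $\xi = (\tau_L,\delta_L,\tau_R,\delta_R) \in \mathbb{R}^4$ let $$f_\xi(x,y) = \begin{cases} (\tau_L x + y + 1,\ -\delta_L x), & x \le 0,\\ (\tau_R x + y + 1,\ -\delta_R x), & x \ge 0,\end{cases}$$ and let $\Phi = \{\xi : \tau_L > |\delta_L + 1|,\ \tau_R < -|\delta_R+1|\}$. For $\xi\in\Phi$, the matrix $\begin{bmatrix}\tau_L & 1\\ -\delta_L & 0\end{bmatrix}$ has eigenvalues $\lambda_L^s,\lambda_L^u$ with $|\lambda_L^s|<1<\lambda_L^u$, and $\begin{bmatrix}\tau_R & 1\\ -\delta_R & 0\end{bmatrix}$ has eigenvalues $\lambda_R^s,\lambda_R^u$ with $|\lambda_R^s|<1$, $\lambda_R^u<-1$. Let $$\phi^+(\xi) = \delta_R - \big(\tau_R + \delta_L + \delta_R - (1+\tau_R)\lambda_L^u\big)\lambda_L^u,\qquad \phi^-(\xi) = \delta_R - \big(\delta_R + \tau_R - (1+\lambda_R^u)\lambda_L^u\big)\lambda_L^u,$$ $\phi_{\min}(\xi) = \min[\phi^+(\xi),\phi^-(\xi)]$, and $T = \left(\frac{1}{1-\lambda_R^s}, 0\right)$. If $\xi \in \Phi$ with $\phi_{\min}(\xi) > 0$ and $\lambda_L^s = \lambda_R^s$, then $f_\xi$ maps the line segment from $T$ to $f_\xi(T)$ into itself, and on this segment $f_\xi$ is conjugate to the skew tent map $$z \mapsto \begin{cases} \lambda_L^u z + 1, & z \le 0,\\ \lambda_R^u z + 1, & z \ge 0,\end{cases}$$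 restricted to the interval $[\lambda_R^u + 1, 1]$. *)

theory Defs
  imports "HOL-Analysis.Analysis"
begin

definition bcnf :: "real \<Rightarrow> real \<Rightarrow> real \<Rightarrow> real \<Rightarrow> real \<times> real \<Rightarrow> real \<times> real" where
  "bcnf tauL deltaL tauR deltaR p =
     (if fst p \<le> 0 then (tauL * fst p + snd p + 1, - deltaL * fst p)
      else (tauR * fst p + snd p + 1, - deltaR * fst p))"

definition in_Phi :: "real \<Rightarrow> real \<Rightarrow> real \<Rightarrow> real \<Rightarrow> bool" where
  "in_Phi tauL deltaL tauR deltaR \<longleftrightarrow> tauL > \<bar>deltaL + 1\<bar> \<and> tauR < - \<bar>deltaR + 1\<bar>"

definition jac :: "real \<Rightarrow> real \<Rightarrow> real^2^2" where
  "jac tau delta = vector [vector [tau, 1], vector [- delta, 0]]"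

definition is_eigenvalue :: "real^2^2 \<Rightarrow> real \<Rightarrow> bool" where
  "is_eigenvalue A lam \<longleftrightarrow> (\<exists>v. v \<noteq> 0 \<and> A *v v = lam *\<^sub>R v)"

definition phi_plus :: "real \<Rightarrow> real \<Rightarrow> real \<Rightarrow> real \<Rightarrow> real \<Rightarrow> real" where
  "phi_plus tauL deltaL tauR deltaR lLu =
     deltaR - (tauR + deltaL + deltaR - (1 + tauR) * lLu) * lLu"

definition phi_minus :: "real \<Rightarrow> real \<Rightarrow> real \<Rightarrow> real \<Rightarrow> real" where
  "phi_minus tauR deltaR lLu lRu =
     deltaR - (deltaR + tauR - (1 + lRu) * lLu) * lLu"

definition skew_tent :: "real \<Rightarrow> real \<Rightarrow> real \<Rightarrow> real" where
  "skew_tent a b z = (if z \<le> 0 then a * z + 1 else b * z + 1)"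

end

theory Submission
  imports Defs
begin

text \<open>Since both pieces share the stable eigenvalue \<open>s\<close>, Vieta gives
  \<open>\<tau> = s + \<lambda>\<^sup>u\<close> and \<open>\<delta> = s \<lambda>\<^sup>u\<close> on each side, so \<open>(1, -s)\<close> is an unstable
  eigenvector of both Jacobians. The line through \<open>T\<close> in this direction is therefore invariant,
  and in the coordinate \<open>z = (1 - s) x\<close> the map acts on it as \<open>z \<mapsto> \<lambda>\<^sup>u z + 1\<close>, with
  \<open>\<lambda>\<^sup>u\<close> taken from the side of the switching line \<open>x = 0\<close>. The segment from \<open>T\<close> to \<open>f(T)\<close>
  corresponds to \<open>[\<lambda>\<^sub>R\<^sup>u + 1, 1]\<close>, which the skew tent map preserves exactly when
  \<open>\<lambda>\<^sub>L\<^sup>u (\<lambda>\<^sub>R\<^sup>u + 1) \<ge> \<lambda>\<^sub>R\<^sup>u\<close>; this is a factor of \<open>\<phi>\<^sup>-\<close>.\<close>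

lemma is_eigenvalue_jac_char_poly:
  assumes "is_eigenvalue (jac tau delta) l"
  shows "l\<^sup>2 - tau * l + delta = 0"
proof -
  obtain v where v: "v \<noteq> 0" "jac tau delta *v v = l *\<^sub>R v"
    using assms unfolding is_eigenvalue_def by blast
  have e1: "tau * v$1 + v$2 = l * v$1" and e2: "- delta * v$1 = l * v$2"
    using v(2) unfolding jac_def
    by (auto simp: vec_eq_iff matrix_vector_mult_def sum_2 forall_2 vector_def)
  have "v$1 \<noteq> 0"
  proof
    assume "v$1 = 0"
    with e1 have "v$2 = 0" by simp
    with \<open>v$1 = 0\<close> have "v = 0" by (simp add: vec_eq_iff forall_2)
    with v(1) show False by simp
  qed
  moreover have "v$2 = (l - tau) * v$1"
    using e1 by (simp add: algebra_simps)
  with e2 have "(l\<^sup>2 - tau * l + delta) * v$1 = 0"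
    by (simp add: algebra_simps power2_eq_square)
  ultimately show ?thesis by simp
qed

lemma quadratic_distinct_roots_vieta:
  fixes s u tau delta :: "'a :: idom"
  assumes "s\<^sup>2 - tau * s + delta = 0" and "u\<^sup>2 - tau * u + delta = 0" and "s \<noteq> u"
  shows "tau = s + u" and "delta = s * u"
proof -
  have "(s - u) * (s + u - tau) = (s\<^sup>2 - tau * s + delta) - (u\<^sup>2 - tau * u + delta)"
    by (simp add: algebra_simps power2_eq_square)
  with assms(1,2) have "(s - u) * (s + u - tau) = 0" by simp
  with assms(3) show tau: "tau = s + u" by simp
  with assms(1) show "delta = s * u" by (simp add: algebra_simps power2_eq_square)
qed

lemma is_eigenvalue_jac_vieta:
  assumes "is_eigenvalue (jac tau delta) s" and "is_eigenvalue (jac tau delta) u" and "s \<noteq> u"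
  shows "tau = s + u" and "delta = s * u"
  using quadratic_distinct_roots_vieta[OF is_eigenvalue_jac_char_poly is_eigenvalue_jac_char_poly]
    assms by auto

lemma skew_tent_maps_interval:
  fixes a b z :: real
  assumes "0 \<le> a" and "b \<le> 0" and "b \<le> a * (b + 1)" and "z \<in> {b + 1 .. 1}"
  shows "skew_tent a b z \<in> {b + 1 .. 1}"
proof (cases "z \<le> 0")
  case True
  have "a * (b + 1) \<le> a * z" and "a * z \<le> 0"
    using assms True by (auto intro: mult_left_mono mult_nonneg_nonpos)
  with True assms(3) show ?thesis by (simp add: skew_tent_def)
next
  case False
  have "b \<le> b * z"
    using mult_left_mono_neg[of z 1 b] assms(2,4) by simp
  moreover have "b * z \<le> 0"
    using assms(2) False by (simp add: mult_nonpos_nonneg)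
  ultimately show ?thesis using False by (simp add: skew_tent_def)
qed

lemma phi_minus_pos_imp_interval_invariance:
  fixes s a b :: real
  assumes "s < a" and "0 < phi_minus (s + b) (s * b) a b"
  shows "b \<le> a * (b + 1)"
proof -
  have "phi_minus (s + b) (s * b) a b = (a - s) * ((1 + b) * a - b)"
    by (simp add: phi_minus_def algebra_simps)
  with assms have "0 < (1 + b) * a - b"
    by (simp add: zero_less_mult_iff)
  then show ?thesis by (simp add: algebra_simps)
qed

definition unstable_line :: "real \<Rightarrow> real \<Rightarrow> real \<times> real" where
  "unstable_line s z = (z / (1 - s), s * (1 - z) / (1 - s))"

lemma unstable_line_affine:
  "unstable_line s z = (0, s / (1 - s)) + z *\<^sub>R (1 / (1 - s), - s / (1 - s))"
  by (simp add: unstable_line_def algebra_simps diff_divide_distrib)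

lemma closed_segment_unstable_line:
  "closed_segment (unstable_line s a) (unstable_line s b) = unstable_line s ` closed_segment a b"
  unfolding unstable_line_affine closed_segment_translation
    closed_segment_linear_image[OF linear_scaleR_left] image_image ..

lemma bcnf_unstable_line:
  assumes "s < 1"
  shows "bcnf (s + a) (s * a) (s + b) (s * b) (unstable_line s z)
           = unstable_line s (skew_tent a b z)"
proof -
  have sign: "z / (1 - s) \<le> 0 \<longleftrightarrow> z \<le> 0"
    using assms by (simp add: divide_le_0_iff)
  have step: "((s + m) * (z / (1 - s)) + s * (1 - z) / (1 - s) + 1, - (s * m) * (z / (1 - s)))
                = unstable_line s (m * z + 1)" for m
    unfolding unstable_line_def prod.inject
    using assms by (simp add: divide_simps) (simp add: algebra_simps)
  show ?thesis
    using step[of a] step[of b]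
    by (simp add: bcnf_def unstable_line_def skew_tent_def sign)
qed

lemma unstable_line_coordinate:
  assumes "s \<noteq> 1"
  shows "(1 - s) * fst (unstable_line s z) = z"
  using assms by (simp add: unstable_line_def)

lemma homeomorphism_unstable_line:
  assumes "s \<noteq> 1"
  shows "homeomorphism (unstable_line s ` I) I (\<lambda>p. (1 - s) * fst p) (unstable_line s)"
proof (rule homeomorphismI)
  show "continuous_on (unstable_line s ` I) (\<lambda>p. (1 - s) * fst p)"
    by (intro continuous_intros)
  show "continuous_on I (unstable_line s)"
    unfolding unstable_line_def using assms by (intro continuous_intros) auto
qed (use assms in \<open>auto simp: unstable_line_coordinate\<close>)

lemma bcnf_segment_conj_skew_tent:
  fixes s a b :: real
  assumes "s < 1" and "0 \<le> a" and "b \<le> 0" and "b \<le> a * (b + 1)"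
  defines "f \<equiv> bcnf (s + a) (s * a) (s + b) (s * b)"
    and "S \<equiv> closed_segment (unstable_line s 1)
                 (bcnf (s + a) (s * a) (s + b) (s * b) (unstable_line s 1))"
  shows "f ` S \<subseteq> S"
    and "homeomorphism S {b + 1 .. 1} (\<lambda>p. (1 - s) * fst p) (unstable_line s)"
    and "\<forall>p \<in> S. (1 - s) * fst (f p) = skew_tent a b ((1 - s) * fst p)"
proof -
  have f_line: "f (unstable_line s z) = unstable_line s (skew_tent a b z)" for z
    unfolding f_def using bcnf_unstable_line[OF assms(1)] .
  have S: "S = unstable_line s ` {b + 1 .. 1}"
    using assms(3)
    by (simp add: S_def f_line[unfolded f_def] skew_tent_def
        closed_segment_unstable_line closed_segment_eq_real_ivl)
  show "f ` S \<subseteq> S"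
    using skew_tent_maps_interval[OF assms(2-4)] by (auto simp: S f_line)
  show "homeomorphism S {b + 1 .. 1} (\<lambda>p. (1 - s) * fst p) (unstable_line s)"
    unfolding S using assms(1) by (intro homeomorphism_unstable_line) simp
  show "\<forall>p \<in> S. (1 - s) * fst (f p) = skew_tent a b ((1 - s) * fst p)"
    using assms(1) by (auto simp: S f_line unstable_line_coordinate)
qed

theorem proposition10p1:
  fixes tauL deltaL tauR deltaR lLs lLu lRs lRu :: real
  assumes "in_Phi tauL deltaL tauR deltaR"
    and "is_eigenvalue (jac tauL deltaL) lLs" and "is_eigenvalue (jac tauL deltaL) lLu"
    and "\<bar>lLs\<bar> < 1" and "1 < lLu"
    and "is_eigenvalue (jac tauR deltaR) lRs" and "is_eigenvalue (jac tauR deltaR) lRu"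
    and "\<bar>lRs\<bar> < 1" and "lRu < -1"
    and "min (phi_plus tauL deltaL tauR deltaR lLu) (phi_minus tauR deltaR lLu lRu) > 0"
    and "lLs = lRs"
  shows "bcnf tauL deltaL tauR deltaR `
           closed_segment (1 / (1 - lRs), 0) (bcnf tauL deltaL tauR deltaR (1 / (1 - lRs), 0))
         \<subseteq> closed_segment (1 / (1 - lRs), 0) (bcnf tauL deltaL tauR deltaR (1 / (1 - lRs), 0))
       \<and> (\<exists>h h'. homeomorphism
              (closed_segment (1 / (1 - lRs), 0) (bcnf tauL deltaL tauR deltaR (1 / (1 - lRs), 0)))
              {lRu + 1 .. 1} h h'
            \<and> (\<forall>p \<in> closed_segment (1 / (1 - lRs), 0) (bcnf tauL deltaL tauR deltaR (1 / (1 - lRs), 0)).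
                 h (bcnf tauL deltaL tauR deltaR p) = skew_tent lLu lRu (h p)))"
proof -
  have stable: "lRs < 1" using assms(8) by simp
  have L: "tauL = lRs + lLu" "deltaL = lRs * lLu"
    using is_eigenvalue_jac_vieta[OF assms(2,3)] assms(4,5,11) by auto
  have R: "tauR = lRs + lRu" "deltaR = lRs * lRu"
    using is_eigenvalue_jac_vieta[OF assms(6,7)] assms(8,9) by auto
  have "lRu \<le> lLu * (lRu + 1)"
    using phi_minus_pos_imp_interval_invariance[of lRs lLu lRu] assms(5,10) stable
    unfolding R by simp
  moreover have "(1 / (1 - lRs), 0) = unstable_line lRs 1"
    by (simp add: unstable_line_def)
  ultimately show ?thesis
    using bcnf_segment_conj_skew_tent[of lRs lLu lRu] stable assms(5,9)
    unfolding L R by (intro conjI exI) auto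
qed

end
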